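(* Let $\beta\in(0,1)$, $\mu\ge0$, $\eta>0$, $\zeta=\frac{\beta}{1+\eta\mu}$. In the general conversion scheme below with online learner $\Delta_1=\mathbf{0}$, $\Delta_{t+1}=\zeta(\Delta_t-\eta\mathbf{g}_t)$, and with the choice $\mathbf{x}_t=\mathbf{x}_{t-1}+\frac1\zeta\Delta_t$, define $\mathbf{z}_t:=\mathbf{x}_t+\frac{1}{1-\zeta}\Delta_t$. Then for every $t$, $$\mathbf{z}_{t+1}-\mathbf{z}_t=-\frac{\eta}{1-\zeta}\mathbf{g}_t.$$
   Context: General conversion scheme: input $\mathbf{x}_0=\mathbf{w}_0\in\mathbb{R}^d$, $T$, $\mu\ge0$, online learner $\mathcal{A}$. For $t=1,\dots,T$: receive $\Delta_t$ from $\mathcal{A}$; choose $\mathbf{x}_t$; $\mathbf{w}_t=\mathbf{x}_t+\Delta_t$; $\mathbf{y}_t=\mathbf{x}_t+s_t\Delta_t$ with $s_t\sim\mathrm{Unif}[0,1]$ i.i.d.; $\mathbf{g}_t$ is a stochastic gradient of the objective at $\mathbf{y}_t$; send the loss $\ell_t(\mathbf{v})=\langle\mathbf{g}_t,\mathbf{v}\rangle+\frac\mu2\|\mathbf{v}\|^2$ to $\mathcal{A}$. *)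

theory Defs
  imports "HOL-Analysis.Analysis"
begin

end

theory Submission
  imports Defs
begin

(* Both x and z move by multiples of the new increment \<Delta>(t+1) = \<zeta> (\<Delta> t - \<eta> g t), and
   1/\<zeta> + 1/(1 - \<zeta>) = 1/(\<zeta> (1 - \<zeta>)), so z advances by (\<Delta> t - \<eta> g t)/(1 - \<zeta>), while its
   old \<Delta>-part \<Delta> t/(1 - \<zeta>) cancels. *)

lemma damping_factor_bounds:
  fixes \<beta> \<mu> \<eta> :: real
  assumes "0 < \<beta>" "\<beta> < 1" "0 \<le> \<mu>" "0 < \<eta>"
  shows "0 < \<beta> / (1 + \<eta> * \<mu>)" "\<beta> / (1 + \<eta> * \<mu>) < 1"
proof -
  have "1 \<le> 1 + \<eta> * \<mu>"
    using assms(3,4) by simp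
  then show "0 < \<beta> / (1 + \<eta> * \<mu>)" "\<beta> / (1 + \<eta> * \<mu>) < 1"
    using assms(1,2) by (simp_all add: divide_less_eq)
qed

lemma averaged_iterate_step:
  fixes x \<Delta> \<Delta>' g :: "'a::real_vector"
  assumes "\<zeta> \<noteq> 0" "\<zeta> \<noteq> 1"
    and "\<Delta>' = \<zeta> *\<^sub>R (\<Delta> - \<eta> *\<^sub>R g)"
  shows "(x + (1 / \<zeta>) *\<^sub>R \<Delta>' + (1 / (1 - \<zeta>)) *\<^sub>R \<Delta>') - (x + (1 / (1 - \<zeta>)) *\<^sub>R \<Delta>)
      = - ((\<eta> / (1 - \<zeta>)) *\<^sub>R g)"
proof -
  have inv_sum: "1 / \<zeta> + 1 / (1 - \<zeta>) = 1 / (\<zeta> * (1 - \<zeta>))"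
    using assms(1,2) by (simp add: field_simps)
  have "(x + (1 / \<zeta>) *\<^sub>R \<Delta>' + (1 / (1 - \<zeta>)) *\<^sub>R \<Delta>') - (x + (1 / (1 - \<zeta>)) *\<^sub>R \<Delta>)
      = (1 / (\<zeta> * (1 - \<zeta>))) *\<^sub>R \<Delta>' - (1 / (1 - \<zeta>)) *\<^sub>R \<Delta>"
    by (simp add: inv_sum flip: scaleR_add_left)
  also have "\<dots> = (1 / (1 - \<zeta>)) *\<^sub>R (\<Delta> - \<eta> *\<^sub>R g) - (1 / (1 - \<zeta>)) *\<^sub>R \<Delta>"
    using assms(1) by (simp add: assms(3))
  also have "\<dots> = - ((\<eta> / (1 - \<zeta>)) *\<^sub>R g)"
    by (simp add: scaleR_diff_right)
  finally show ?thesis .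
qed

theorem proposition2:
  fixes \<beta> \<mu> \<eta> \<zeta> :: real
    and x \<Delta> g z :: "nat \<Rightarrow> real ^ 'd"
  assumes "0 < \<beta>" and "\<beta> < 1" and "0 \<le> \<mu>" and "0 < \<eta>"
    and "\<zeta> = \<beta> / (1 + \<eta> * \<mu>)"
    and "\<Delta> 1 = 0"
    and "\<And>t. 1 \<le> t \<Longrightarrow> \<Delta> (t + 1) = \<zeta> *\<^sub>R (\<Delta> t - \<eta> *\<^sub>R g t)"
    and "\<And>t. 1 \<le> t \<Longrightarrow> x t = x (t - 1) + (1 / \<zeta>) *\<^sub>R \<Delta> t"
    and "\<And>t. z t = x t + (1 / (1 - \<zeta>)) *\<^sub>R \<Delta> t"
    and "1 \<le> t"
  shows "z (t + 1) - z t = - ((\<eta> / (1 - \<zeta>)) *\<^sub>R g t)"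
proof -
  have "0 < \<zeta>" "\<zeta> < 1"
    using damping_factor_bounds[OF assms(1-4)] assms(5) by simp_all
  moreover have "x (t + 1) = x t + (1 / \<zeta>) *\<^sub>R \<Delta> (t + 1)"
    using assms(8)[of "t + 1"] by simp
  ultimately show ?thesis
    unfolding assms(9)
    using averaged_iterate_step[OF _ _ assms(7)[OF assms(10)], of "x t"] by simp
qed

end
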